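(* Let $d,a_1,\ldots,a_n$ be positive integers and $c_1,\ldots,c_n\ge 0$ integers. Then the ideal $x_1^{c_1}\cdots x_n^{c_n}I_{(d;a_1,\ldots,a_n)}$ can be extended by linear quotients to $I_{(d+\sum_{i=1}^nc_i;\,a_1+c_1,\ldots,a_n+c_n)}$.
   Context: $S=K[x_1,\ldots,x_n]$, $G(I)$ = minimal monomial generating set. For positive integers $d,a_1,\dots,a_n$, $I_{(d;a_1,\ldots,a_n)}\subset S$ is the monomial ideal generated by all monomials $u$ of degree $d$ with $\deg_{x_i}(u)\le a_i$ for all $i$ (ideal of Veronese type). For monomial ideals $I\subseteq J$ with $G(I)\subseteq G(J)$, $I$ can be extended by linear quotients to $J$ if $G(J)\setminus G(I)$ can be ordered $v_1,\ldots,v_m$ such that for each $i=0,\ldots,m-1$ the colon ideal $(G(I),v_1,\ldots,v_i):v_{i+1}$ is generated by variables. *)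

theory Defs
  imports Main
begin

(* Monomials in S = K[x_1,...,x_n] are represented by exponent vectors
   u :: nat => nat, where u (i-1) is the exponent of x_i; a monomial of S
   has u i = 0 for all i >= n.  Multiplication of monomials is addition of
   exponent vectors, divisibility is the pointwise order. *)

definition is_mono :: "nat \<Rightarrow> (nat \<Rightarrow> nat) \<Rightarrow> bool" where
  "is_mono n u \<longleftrightarrow> (\<forall>i\<ge>n. u i = 0)"

definition mdvd :: "(nat \<Rightarrow> nat) \<Rightarrow> (nat \<Rightarrow> nat) \<Rightarrow> bool" where
  "mdvd u w \<longleftrightarrow> (\<forall>i. u i \<le> w i)"

definition mdeg :: "nat \<Rightarrow> (nat \<Rightarrow> nat) \<Rightarrow> nat" where
  "mdeg n u = (\<Sum>i<n. u i)"

definition in_mideal :: "(nat \<Rightarrow> nat) set \<Rightarrow> (nat \<Rightarrow> nat) \<Rightarrow> bool" where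
  "in_mideal G w \<longleftrightarrow> (\<exists>g\<in>G. mdvd g w)"

definition mingens :: "(nat \<Rightarrow> nat) set \<Rightarrow> (nat \<Rightarrow> nat) set" where
  "mingens G = {g\<in>G. \<not> (\<exists>h\<in>G. h \<noteq> g \<and> mdvd h g)}"

definition veronese_gens :: "nat \<Rightarrow> nat \<Rightarrow> (nat \<Rightarrow> nat) \<Rightarrow> (nat \<Rightarrow> nat) set" where
  "veronese_gens n d a = {u. is_mono n u \<and> mdeg n u = d \<and> (\<forall>i<n. u i \<le> a i)}"

(* The monomial ideal (G) : v is generated by variables: there is a set S of
   variables such that a monomial w of S lies in (G):v  (i.e. w*v lies in (G))
   iff some x_j with j in S divides w.  (Monomial ideals are determined by the
   monomials they contain.) *)
definition colon_gen_by_vars :: "nat \<Rightarrow> (nat \<Rightarrow> nat) set \<Rightarrow> (nat \<Rightarrow> nat) \<Rightarrow> bool" where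
  "colon_gen_by_vars n G v \<longleftrightarrow>
     (\<exists>S\<subseteq>{..<n}. \<forall>w. is_mono n w \<longrightarrow>
        (in_mideal G (\<lambda>i. w i + v i) \<longleftrightarrow> (\<exists>j\<in>S. 0 < w j)))"

(* I (with minimal generating set GI) can be extended by linear quotients to
   J (with minimal generating set GJ). *)
definition ext_lin_quot :: "nat \<Rightarrow> (nat \<Rightarrow> nat) set \<Rightarrow> (nat \<Rightarrow> nat) set \<Rightarrow> bool" where
  "ext_lin_quot n GI GJ \<longleftrightarrow> GI \<subseteq> GJ \<and>
     (\<exists>vs. distinct vs \<and> set vs = GJ - GI \<and>
        (\<forall>i<length vs. colon_gen_by_vars n (GI \<union> set (take i vs)) (vs ! i)))"

end

theory Submission
  imports Defs "HOL-Library.Fun_Lexorder"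
begin

(* Order the generators of the larger ideal J by increasing deficit with respect to
   x^c (the degree of lcm(u, x^c)/u), ties broken by decreasing lexicographic order.
   The generators of deficit 0 are exactly those of x^c I, so they come first.
   If g precedes v, an exchange argument gives indices j, k with v_j < g_j and
   g_k < v_k such that v x_j / x_k is again a generator of J and also precedes v.
   Hence every earlier generator dividing w v forces some x_j with v x_j in the
   earlier ideal to divide w: the colon ideal is generated by these variables. *)

lemma colon_gen_by_vars_if_exchange:
  assumes "\<And>g. g \<in> G \<Longrightarrow> \<exists>j<n. v j < g j \<and> in_mideal G (v(j := Suc (v j)))"
  shows "colon_gen_by_vars n G v"
  unfolding colon_gen_by_vars_def
proof (intro exI conjI allI impI)
  let ?S = "{j. j < n \<and> in_mideal G (v(j := Suc (v j)))}"
  show "?S \<subseteq> {..<n}" by auto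
  fix w :: "nat \<Rightarrow> nat"
  show "in_mideal G (\<lambda>i. w i + v i) \<longleftrightarrow> (\<exists>j\<in>?S. 0 < w j)"
  proof
    assume "in_mideal G (\<lambda>i. w i + v i)"
    then obtain g where g: "g \<in> G" "mdvd g (\<lambda>i. w i + v i)"
      unfolding in_mideal_def by blast
    then obtain j where j: "j < n" "v j < g j" "in_mideal G (v(j := Suc (v j)))"
      using assms by blast
    have "g j \<le> w j + v j" using g(2) unfolding mdvd_def by blast
    with j have "j \<in> ?S" "0 < w j" by auto
    then show "\<exists>j\<in>?S. 0 < w j" by blast
  next
    assume "\<exists>j\<in>?S. 0 < w j"
    then obtain j where "0 < w j" "in_mideal G (v(j := Suc (v j)))" by blast
    moreover have "mdvd (v(j := Suc (v j))) (\<lambda>i. w i + v i)"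
      using \<open>0 < w j\<close> unfolding mdvd_def by simp
    ultimately show "in_mideal G (\<lambda>i. w i + v i)"
      unfolding in_mideal_def mdvd_def using order_trans by blast
  qed
qed

lemma sorted_wrt_list_of_finite_set:
  assumes "finite X" "\<And>x y z. R x y \<Longrightarrow> R y z \<Longrightarrow> R x z"
    and "\<And>x. \<not> R x x"
    and "\<And>x y. x \<in> X \<Longrightarrow> y \<in> X \<Longrightarrow> x \<noteq> y \<Longrightarrow> R x y \<or> R y x"
  obtains xs where "distinct xs" "set xs = X" "sorted_wrt R xs"
proof -
  have "\<exists>xs. distinct xs \<and> set xs = X \<and> sorted_wrt R xs"
    using assms(1,4)
  proof (induction X rule: finite_induct)
    case empty
    then show ?case by simp
  next
    case (insert x X)
    then obtain xs where xs: "distinct xs" "set xs = X" "sorted_wrt R xs" by blast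
    define ys where "ys = filter (\<lambda>y. R y x) xs @ x # filter (\<lambda>y. R x y) xs"
    have "distinct ys" using xs insert.hyps assms(2,3) unfolding ys_def by auto
    moreover have "set ys = insert x X" using xs insert.prems unfolding ys_def by auto
    moreover have "sorted_wrt R ys" using xs assms(2) unfolding ys_def
      by (auto simp: sorted_wrt_append sorted_wrt_filter)
    ultimately show ?case by blast
  qed
  with that show ?thesis by blast
qed

lemma set_take_sorted_wrt:
  assumes "sorted_wrt R xs" "i < length xs"
    and "\<And>x y z. R x y \<Longrightarrow> R y z \<Longrightarrow> R x z" "\<And>x. \<not> R x x"
  shows "set (take i xs) = {x \<in> set xs. R x (xs ! i)}"
proof (intro set_eqI iffI)
  fix x assume "x \<in> set (take i xs)"
  then obtain m where "m < i" "x = xs ! m" using assms(2) by (auto simp: in_set_conv_nth)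
  then show "x \<in> {x \<in> set xs. R x (xs ! i)}"
    using assms(1,2) by (auto simp: sorted_wrt_iff_nth_less)
next
  fix x assume x: "x \<in> {x \<in> set xs. R x (xs ! i)}"
  then obtain m where m: "m < length xs" "x = xs ! m" by (auto simp: in_set_conv_nth)
  have "m < i"
  proof (rule ccontr)
    assume "\<not> m < i"
    then have "m = i \<or> i < m" by linarith
    then have "m = i \<or> R (xs ! i) x"
      using assms(1) m by (auto simp: sorted_wrt_iff_nth_less)
    with x m assms(3,4) show False by blast
  qed
  with m show "x \<in> set (take i xs)" by (auto simp: in_set_conv_nth)
qed

lemma ext_lin_quot_by_order:
  assumes "GI \<subseteq> GJ" "finite (GJ - GI)"
    and "\<And>u v w. R u v \<Longrightarrow> R v w \<Longrightarrow> R u w" "\<And>u. \<not> R u u"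
    and "\<And>u v. u \<in> GJ - GI \<Longrightarrow> v \<in> GJ - GI \<Longrightarrow> u \<noteq> v \<Longrightarrow> R u v \<or> R v u"
    and "\<And>v. v \<in> GJ - GI \<Longrightarrow> colon_gen_by_vars n (GI \<union> {u \<in> GJ - GI. R u v}) v"
  shows "ext_lin_quot n GI GJ"
proof -
  obtain vs where vs: "distinct vs" "set vs = GJ - GI" "sorted_wrt R vs"
    using sorted_wrt_list_of_finite_set[of "GJ - GI" R] assms(2-5) by blast
  have colon: "\<forall>i<length vs. colon_gen_by_vars n (GI \<union> set (take i vs)) (vs ! i)"
  proof (intro allI impI)
    fix i assume "i < length vs"
    have "set (take i vs) = {u \<in> GJ - GI. R u (vs ! i)}"
      using set_take_sorted_wrt[of R vs i] vs(2,3) \<open>i < length vs\<close> assms(3,4) by simp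
    with assms(6) vs(2) \<open>i < length vs\<close>
    show "colon_gen_by_vars n (GI \<union> set (take i vs)) (vs ! i)" by (metis nth_mem)
  qed
  with vs(1,2) have "\<exists>vs. distinct vs \<and> set vs = GJ - GI \<and>
      (\<forall>i<length vs. colon_gen_by_vars n (GI \<union> set (take i vs)) (vs ! i))"
    by blast
  with assms(1) show ?thesis unfolding ext_lin_quot_def by (rule conjI)
qed

lemma mdvd_eq_if_mdeg_eq:
  assumes "mdvd h g" "is_mono n g" "mdeg n h = mdeg n g"
  shows "h = g"
proof
  fix i show "h i = g i"
  proof (cases "i < n")
    case True
    with assms(1,3) show ?thesis
      using sum_mono_inv[of h "{..<n}" g i] unfolding mdvd_def mdeg_def by simp
  next
    case False
    with assms(1,2) show ?thesis unfolding mdvd_def is_mono_def by (metis le_0_eq not_less)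
  qed
qed

lemma mingens_equidegree:
  assumes "\<And>u. u \<in> X \<Longrightarrow> is_mono n u" "\<And>u. u \<in> X \<Longrightarrow> mdeg n u = e"
  shows "mingens X = X"
proof -
  have "h = g" if "h \<in> X" "g \<in> X" "mdvd h g" for h g
    using mdvd_eq_if_mdeg_eq[of h g n] assms that by simp
  then show ?thesis unfolding mingens_def by blast
qed

lemma finite_veronese_gens: "finite (veronese_gens n D b)"
proof (rule finite_subset)
  show "veronese_gens n D b \<subseteq>
      {u. \<forall>i. (i \<in> {..<n} \<longrightarrow> u i \<in> {..D}) \<and> (i \<notin> {..<n} \<longrightarrow> u i = 0)}"
    unfolding veronese_gens_def is_mono_def mdeg_def
    by (auto intro: member_le_sum)
  show "finite {u. \<forall>i. (i \<in> {..<n} \<longrightarrow> u i \<in> {..D}) \<and> (i \<notin> {..<n} \<longrightarrow> u i = 0)}"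
    by (intro finite_set_of_finite_funs) simp_all
qed

definition exchange :: "(nat \<Rightarrow> nat) \<Rightarrow> nat \<Rightarrow> nat \<Rightarrow> nat \<Rightarrow> nat" where
  "exchange v j k = v(k := v k - 1, j := Suc (v j))"

definition deficit :: "nat \<Rightarrow> (nat \<Rightarrow> nat) \<Rightarrow> (nat \<Rightarrow> nat) \<Rightarrow> nat" where
  "deficit n c u = (\<Sum>i<n. c i - u i)"

lemma mdeg_exchange:
  assumes "j < n" "k < n" "j \<noteq> k" "0 < v k"
  shows "mdeg n (exchange v j k) = mdeg n v"
proof -
  have "exchange v j k i + (if i = k then 1 else 0) = v i + (if i = j then 1 else 0)" for i
    using assms(3,4) by (simp add: exchange_def)
  then have "(\<Sum>i<n. exchange v j k i + (if i = k then 1 else 0))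
      = (\<Sum>i<n. v i + (if i = j then 1 else 0))" by presburger
  with assms(1,2) show ?thesis unfolding mdeg_def sum.distrib by simp
qed

lemma deficit_exchange:
  assumes "j < n" "k < n" "j \<noteq> k" "0 < v k"
  shows "deficit n c (exchange v j k) + (if v j < c j then 1 else 0)
       = deficit n c v + (if v k \<le> c k then 1 else 0)"
proof -
  have "(c i - exchange v j k i) + (if i = j then if v j < c j then 1 else 0 else 0)
      = (c i - v i) + (if i = k then if v k \<le> c k then 1 else 0 else 0)" for i
    using assms(3,4) by (auto simp: exchange_def)
  then have "(\<Sum>i<n. (c i - exchange v j k i) + (if i = j then if v j < c j then 1 else 0 else 0))
      = (\<Sum>i<n. (c i - v i) + (if i = k then if v k \<le> c k then 1 else 0 else 0))" by presburger
  with assms(1,2) show ?thesis unfolding deficit_def sum.distrib by simp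
qed

(* For monomials of equal degree this reduces comparing deficits to comparing
   max (c i) (u i) termwise. *)
lemma deficit_plus_mdeg: "deficit n c u + mdeg n u = (\<Sum>i<n. max (c i) (u i))"
  unfolding deficit_def mdeg_def sum.distrib[symmetric] by (intro sum.cong) auto

lemma exchange_lowering_deficit:
  assumes "mdeg n g = mdeg n v" "deficit n c g < deficit n c v"
  obtains j k where "j < n" "k < n" "v j < g j" "g k < v k"
    "deficit n c (exchange v j k) < deficit n c v"
proof -
  have "\<exists>j<n. v j < g j \<and> v j < c j"
  proof (rule ccontr)
    assume "\<not> ?thesis"
    then have "c i - v i \<le> c i - g i" if "i < n" for i
      using that by force
    then have "deficit n c v \<le> deficit n c g" unfolding deficit_def by (intro sum_mono) auto
    with assms(2) show False by simp
  qed
  then obtain j where j: "j < n" "v j < g j" "v j < c j" by blast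
  have "\<exists>k<n. g k < v k \<and> c k < v k"
  proof (rule ccontr)
    assume "\<not> ?thesis"
    then have "max (c i) (v i) \<le> max (c i) (g i)" if "i < n" for i
      using that by force
    then have "(\<Sum>i<n. max (c i) (v i)) \<le> (\<Sum>i<n. max (c i) (g i))" by (intro sum_mono) auto
    with assms deficit_plus_mdeg[of n c v] deficit_plus_mdeg[of n c g] show False by linarith
  qed
  then obtain k where k: "k < n" "g k < v k" "c k < v k" by blast
  have "j \<noteq> k" using j k by auto
  with j k deficit_exchange[of j n k v c]
  have "deficit n c (exchange v j k) < deficit n c v" by simp
  with j k show ?thesis by (intro that) simp_all
qed

lemma exchange_lex_step:
  assumes "is_mono n g" "mdeg n g = mdeg n v" "deficit n c g = deficit n c v" "less_fun v g"
  obtains j k where "j < n" "k < n" "v j < g j" "g k < v k"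
    "deficit n c (exchange v j k) \<le> deficit n c v" "less_fun v (exchange v j k)"
proof -
  obtain t where t: "v t < g t" "\<And>i. i < t \<Longrightarrow> v i = g i"
    using assms(4) unfolding less_fun_def by blast
  have "t < n"
  proof (rule ccontr)
    assume "\<not> t < n"
    with assms(1) have "g t = 0" unfolding is_mono_def by simp
    with t(1) show False by simp
  qed
  have "\<exists>k<n. g k < v k"
  proof (rule ccontr)
    assume "\<not> ?thesis"
    then have "v i \<le> g i" if "i < n" for i
      using that by (meson not_less)
    then have "mdeg n v < mdeg n g"
      unfolding mdeg_def using \<open>t < n\<close> t(1) by (intro sum_strict_mono_ex1) auto
    with assms(2) show False by simp
  qed
  have "\<exists>k<n. g k < v k \<and> (c k < v k \<or> v t < c t)"
  proof (rule ccontr)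
    assume no_k: "\<not> ?thesis"
    with \<open>\<exists>k<n. g k < v k\<close> have "c t \<le> v t" by force
    have "max (c i) (v i) \<le> max (c i) (g i)" if "i < n" for i
      using no_k that by force
    moreover have "max (c t) (v t) < max (c t) (g t)" using \<open>c t \<le> v t\<close> t(1) by simp
    ultimately have "(\<Sum>i<n. max (c i) (v i)) < (\<Sum>i<n. max (c i) (g i))"
      using \<open>t < n\<close> by (intro sum_strict_mono_ex1) auto
    with assms(2,3) deficit_plus_mdeg[of n c v] deficit_plus_mdeg[of n c g] show False
      by linarith
  qed
  then obtain k where k: "k < n" "g k < v k" "c k < v k \<or> v t < c t" by blast
  have "t < k"
    using k(2) t by (metis less_irrefl linorder_neqE_nat less_trans)
  then have "deficit n c (exchange v t k) \<le> deficit n c v"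
    using deficit_exchange[of t n k v c] \<open>t < n\<close> k by (auto split: if_splits)
  moreover have "less_fun v (exchange v t k)"
    using \<open>t < k\<close> by (intro less_funI exI[of _ t]) (simp add: exchange_def)
  ultimately show ?thesis using \<open>t < n\<close> t(1) k(1,2) by (intro that) simp_all
qed

definition precedes :: "nat \<Rightarrow> (nat \<Rightarrow> nat) \<Rightarrow> (nat \<Rightarrow> nat) \<Rightarrow> (nat \<Rightarrow> nat) \<Rightarrow> bool" where
  "precedes n c u v \<longleftrightarrow>
     deficit n c u < deficit n c v \<or> (deficit n c u = deficit n c v \<and> less_fun v u)"

lemma precedes_irrefl: "\<not> precedes n c u u"
  unfolding precedes_def using less_fun_irrefl by blast

lemma precedes_trans: "precedes n c u v \<Longrightarrow> precedes n c v w \<Longrightarrow> precedes n c u w"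
  unfolding precedes_def using less_fun_trans by fastforce

lemma precedes_total:
  assumes "is_mono n u" "is_mono n v" "u \<noteq> v"
  shows "precedes n c u v \<or> precedes n c v u"
proof -
  have "{k. u k \<noteq> v k} \<subseteq> {..<n}"
    using assms(1,2) unfolding is_mono_def
    by (metis (mono_tags) lessThan_iff mem_Collect_eq not_le subsetI)
  then have "less_fun u v \<or> less_fun v u"
    using less_fun_trichotomy[of u v] assms(3) finite_subset by blast
  then show ?thesis unfolding precedes_def by linarith
qed

lemma exchange_precedes:
  assumes "is_mono n g" "mdeg n g = mdeg n v" "precedes n c g v"
  obtains j k where "j < n" "k < n" "v j < g j" "g k < v k" "precedes n c (exchange v j k) v"
  using assms(3) unfolding precedes_def
proof (elim disjE conjE)
  assume "deficit n c g < deficit n c v"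
  with assms(2) show ?thesis
    by (elim exchange_lowering_deficit) (auto intro: that simp: precedes_def)
next
  assume "deficit n c g = deficit n c v" "less_fun v g"
  with assms(1,2) obtain j k where "j < n" "k < n" "v j < g j" "g k < v k"
      "deficit n c (exchange v j k) \<le> deficit n c v" "less_fun v (exchange v j k)"
    by (rule exchange_lex_step)
  then show ?thesis by (intro that) (auto simp: precedes_def order_le_less)
qed

lemma exchange_mem_veronese_gens:
  assumes "v \<in> veronese_gens n D b" "g \<in> veronese_gens n D b"
    and "j < n" "k < n" "v j < g j" "g k < v k"
  shows "exchange v j k \<in> veronese_gens n D b"
proof -
  have "j \<noteq> k" "0 < v k" using assms(5,6) by auto
  have "g j \<le> b j" using assms(2,3) unfolding veronese_gens_def by blast
  then have "exchange v j k j \<le> b j" using assms(5) by (simp add: exchange_def)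
  with assms(1,3,4) \<open>j \<noteq> k\<close> \<open>0 < v k\<close> mdeg_exchange[of j n k v] show ?thesis
    by (auto simp: veronese_gens_def is_mono_def exchange_def)
qed

lemma colon_veronese_gens_precedes:
  assumes "v \<in> veronese_gens n D b"
  shows "colon_gen_by_vars n {u \<in> veronese_gens n D b. precedes n c u v} v"
proof (rule colon_gen_by_vars_if_exchange)
  fix g assume g: "g \<in> {u \<in> veronese_gens n D b. precedes n c u v}"
  then have "is_mono n g" "mdeg n g = mdeg n v" using assms by (simp_all add: veronese_gens_def)
  with g obtain j k where jk: "j < n" "k < n" "v j < g j" "g k < v k"
      "precedes n c (exchange v j k) v"
    using exchange_precedes by blast
  then have "exchange v j k \<in> {u \<in> veronese_gens n D b. precedes n c u v}"
    using exchange_mem_veronese_gens[OF assms] g by blast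
  moreover have "mdvd (exchange v j k) (v(j := Suc (v j)))"
    unfolding mdvd_def exchange_def by simp
  ultimately show "\<exists>j<n. v j < g j \<and>
      in_mideal {u \<in> veronese_gens n D b. precedes n c u v} (v(j := Suc (v j)))"
    using jk(1,3) unfolding in_mideal_def by blast
qed

lemma shift_veronese_gens_eq:
  assumes "is_mono n c"
  shows "(\<lambda>u i. c i + u i) ` veronese_gens n d a
       = {u \<in> veronese_gens n (d + (\<Sum>i<n. c i)) (\<lambda>i. a i + c i). deficit n c u = 0}"
proof (intro set_eqI iffI)
  fix u assume "u \<in> (\<lambda>u i. c i + u i) ` veronese_gens n d a"
  with assms show "u \<in> {u \<in> veronese_gens n (d + (\<Sum>i<n. c i)) (\<lambda>i. a i + c i). deficit n c u = 0}"
    by (auto simp: veronese_gens_def is_mono_def mdeg_def deficit_def sum.distrib)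
next
  fix u assume u: "u \<in> {u \<in> veronese_gens n (d + (\<Sum>i<n. c i)) (\<lambda>i. a i + c i). deficit n c u = 0}"
  then have "c i \<le> u i" for i
    using assms by (cases "i < n") (auto simp: deficit_def is_mono_def)
  then have "u = (\<lambda>i. c i + (u i - c i))" and "(\<lambda>i. u i - c i) \<in> veronese_gens n d a"
    using u by (auto simp: veronese_gens_def is_mono_def mdeg_def sum_subtractf_nat)
  then show "u \<in> (\<lambda>u i. c i + u i) ` veronese_gens n d a" by (rule image_eqI)
qed

theorem lemma3p6:
  fixes n d :: nat and a c :: "nat \<Rightarrow> nat"
  assumes "0 < d"
    and "\<forall>i<n. 0 < a i"
    and "is_mono n c"
  shows "ext_lin_quot n
           (mingens ((\<lambda>u i. c i + u i) ` veronese_gens n d a))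
           (mingens (veronese_gens n (d + (\<Sum>i<n. c i)) (\<lambda>i. a i + c i)))"
proof -
  let ?GI = "(\<lambda>u i. c i + u i) ` veronese_gens n d a"
  let ?GJ = "veronese_gens n (d + (\<Sum>i<n. c i)) (\<lambda>i. a i + c i)"
  have GI: "?GI = {u \<in> ?GJ. deficit n c u = 0}"
    using assms(3) by (rule shift_veronese_gens_eq)
  have "mingens ?GJ = ?GJ"
    by (rule mingens_equidegree) (auto simp: veronese_gens_def)
  moreover have "mingens ?GI = ?GI"
    unfolding GI by (rule mingens_equidegree) (auto simp: veronese_gens_def)
  moreover have "ext_lin_quot n ?GI ?GJ"
  proof (rule ext_lin_quot_by_order[where R = "precedes n c"])
    show "?GI \<subseteq> ?GJ" unfolding GI by blast
    show "finite (?GJ - ?GI)" using finite_veronese_gens by blast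
    show "\<And>u v w. precedes n c u v \<Longrightarrow> precedes n c v w \<Longrightarrow> precedes n c u w"
      by (rule precedes_trans)
    show "\<And>u. \<not> precedes n c u u" by (rule precedes_irrefl)
    show "\<And>u v. u \<in> ?GJ - ?GI \<Longrightarrow> v \<in> ?GJ - ?GI \<Longrightarrow> u \<noteq> v
        \<Longrightarrow> precedes n c u v \<or> precedes n c v u"
      by (rule precedes_total) (simp_all add: veronese_gens_def)
  next
    fix v assume "v \<in> ?GJ - ?GI"
    then have "?GI \<union> {u \<in> ?GJ - ?GI. precedes n c u v} = {u \<in> ?GJ. precedes n c u v}"
      by (auto simp: GI precedes_def)
    with \<open>v \<in> ?GJ - ?GI\<close> show "colon_gen_by_vars n (?GI \<union> {u \<in> ?GJ - ?GI. precedes n c u v}) v"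
      using colon_veronese_gens_precedes by simp
  qed
  ultimately show ?thesis by simp
qed

end
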